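(* Let $\lambda>0$ and let $f$ be a bounded, non-constant function belonging to $\mathcal B_{\lambda}$. For $x,y>0$ let $dP_{y,x}$ be the gamma distribution on $(0,\infty)$ with density $\frac{1}{\Gamma(y)}(y/x)^y t^{y-1}e^{-ty/x}$ with respect to Lebesgue measure, and let $g_\lambda(y)=\frac{y^{\lambda}\Gamma(y)}{\Gamma(\lambda+y)}$. (i) If $\lambda\le 1$, then for all $x,y>0$, $$\int_0^\infty f(t)\,dP_{y,x}(t)<f(x).$$ (ii) If $\lambda>1$, then for all $x,y>0$, $$g_\lambda(y)\int_0^\infty f(t)\,dP_{y,x}(t)<f(x).$$
   Context: For $\lambda>0$, $\mathcal B_\lambda$ (generalized Bernstein functions of order $\lambda$) is the class of non-negative functions $f$ on $(0,\infty)$ having derivatives of all orders such that $x\mapsto f'(x)x^{1-\lambda}$ is completely monotonic on $(0,\infty)$. *)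

theory Defs
  imports "HOL-Analysis.Analysis"
begin

definition smooth_on :: "real set \<Rightarrow> (real \<Rightarrow> real) \<Rightarrow> bool" where
  "smooth_on S f \<longleftrightarrow> (\<forall>n. \<forall>x\<in>S. ((deriv ^^ n) f) differentiable (at x))"

definition completely_monotonic_on :: "real set \<Rightarrow> (real \<Rightarrow> real) \<Rightarrow> bool" where
  "completely_monotonic_on S g \<longleftrightarrow>
     smooth_on S g \<and> (\<forall>n. \<forall>x\<in>S. (-1) ^ n * (deriv ^^ n) g x \<ge> 0)"

definition gen_bernstein :: "real \<Rightarrow> (real \<Rightarrow> real) \<Rightarrow> bool" where
  "gen_bernstein lam f \<longleftrightarrow>
     (\<forall>x>0. f x \<ge> 0) \<and> smooth_on {0<..} f \<and>
     completely_monotonic_on {0<..} (\<lambda>x. deriv f x * x powr (1 - lam))"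

definition gamma_dens :: "real \<Rightarrow> real \<Rightarrow> real \<Rightarrow> real" where
  "gamma_dens y x t = (1 / Gamma y) * (y / x) powr y * t powr (y - 1) * exp (- t * y / x)"

definition g_lam :: "real \<Rightarrow> real \<Rightarrow> real" where
  "g_lam lam y = y powr lam * Gamma y / Gamma (lam + y)"

end

theory Submission
  imports Defs
begin

text \<open>
  Put \<open>H t = f' t * t powr (1 - lam)\<close>. Since \<open>H\<close> is non-increasing, \<open>f\<close> is concave as a
  function of \<open>u = t powr lam\<close> and lies below its tangents
  \<open>f t \<le> f r + H r / lam * (t powr lam - r powr lam)\<close>.  The \<open>lam\<close>-th moment of \<open>P_{y,x}\<close> is
  \<open>x powr lam / g_lam lam y\<close>; integrating the tangent inequality at the point \<open>r\<close> with
  \<open>r powr lam\<close> equal to this moment gives \<open>\<integral> f dP_{y,x} < f r\<close>, strictly because a bounded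
  non-constant \<open>f\<close> is not affine in \<open>t powr lam\<close>.  By log-convexity of \<open>Gamma\<close>,
  \<open>g_lam lam y \<ge> 1\<close> for \<open>lam \<le> 1\<close>, so \<open>r \<le> x\<close> and (i) follows from monotonicity of \<open>f\<close>;
  and \<open>g_lam lam y \<le> 1\<close> for \<open>lam \<ge> 1\<close>, so \<open>r \<ge> x\<close> and (ii) follows because
  \<open>f t / t powr lam\<close> is non-increasing (a consequence of \<open>f \<ge> 0\<close> and the tangent inequality).
\<close>

lemma smooth_on_has_real_derivative:
  assumes "smooth_on S f" "x \<in> S"
  shows "(f has_real_derivative deriv f x) (at x)"
proof -
  have "((deriv ^^ 0) f) differentiable (at x)"
    using assms unfolding smooth_on_def by blast
  then show ?thesis
    by (simp add: DERIV_deriv_iff_real_differentiable)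
qed

lemma completely_monotonic_on_nonneg:
  assumes "completely_monotonic_on S g" "x \<in> S"
  shows "0 \<le> g x"
  using assms unfolding completely_monotonic_on_def by (metis funpow_0 mult_1 power_0)

lemma completely_monotonic_on_antimono:
  assumes "completely_monotonic_on S g" "{s..t} \<subseteq> S" "s \<le> t"
  shows "g t \<le> g s"
proof (rule deriv_nonpos_imp_antimono[OF _ _ \<open>s \<le> t\<close>])
  fix u assume "u \<in> {s..t}"
  then have u: "u \<in> S" using assms(2) by blast
  show "(g has_real_derivative deriv g u) (at u)"
    using assms(1) u unfolding completely_monotonic_on_def by (blast intro: smooth_on_has_real_derivative)
  have "(-1) ^ 1 * (deriv ^^ 1) g u \<ge> 0"
    using assms(1) u unfolding completely_monotonic_on_def by blast
  then show "deriv g u \<le> 0" by simp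
qed

lemma concave_in_powr_tangent:
  fixes F K :: "real \<Rightarrow> real"
  assumes lam: "lam > 0"
    and F': "\<And>t. t > 0 \<Longrightarrow> (F has_real_derivative K t * t powr (lam - 1)) (at t)"
    and K: "\<And>s t. 0 < s \<Longrightarrow> s \<le> t \<Longrightarrow> K t \<le> K s"
    and "r > 0" "t > 0"
  shows "F t \<le> F r + K r / lam * (t powr lam - r powr lam)"
proof -
  define \<psi> where "\<psi> u = F r + K r / lam * (u powr lam - r powr lam) - F u" for u
  have \<psi>': "(\<psi> has_real_derivative (K r - K u) * u powr (lam - 1)) (at u)" if "u > 0" for u
  proof -
    have "(\<psi> has_real_derivative 0 + K r / lam * (lam * u powr (lam - 1) - 0) - K u * u powr (lam - 1)) (at u)"
      unfolding \<psi>_def[abs_def]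
      by (intro DERIV_diff DERIV_add DERIV_cmult DERIV_const has_real_derivative_powr F' that)
    then show ?thesis
      using lam by (simp add: algebra_simps)
  qed
  have "\<psi> r \<le> \<psi> t"
  proof (cases "t \<le> r")
    case True
    show ?thesis
    proof (rule deriv_nonpos_imp_antimono[OF \<psi>' _ True])
      fix u assume "u \<in> {t..r}"
      then show "0 < u" "(K r - K u) * u powr (lam - 1) \<le> 0"
        using K[of u r] \<open>t > 0\<close> by (auto intro: mult_nonpos_nonneg)
    qed
  next
    case False
    show ?thesis
    proof (rule deriv_nonneg_imp_mono[OF \<psi>' _ ])
      fix u assume "u \<in> {r..t}"
      then show "0 < u" "(K r - K u) * u powr (lam - 1) \<ge> 0"
        using K[of r u] \<open>r > 0\<close> by auto
    qed (use False in simp)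
  qed
  then show ?thesis
    by (simp add: \<psi>_def)
qed

lemma Gamma_add_le_powr_Gamma:
  fixes y a :: real
  assumes "y > 0" "0 \<le> a" "a \<le> 1"
  shows "Gamma (y + a) \<le> y powr a * Gamma y"
proof -
  have Gy: "Gamma y > 0" "Gamma (y + a) > 0"
    using assms by (simp_all add: Gamma_real_pos)
  then have Gy0: "Gamma y \<noteq> 0"
    by simp
  have "ln (Gamma ((1 - a) *\<^sub>R y + a *\<^sub>R (y + 1))) \<le> (1 - a) * ln (Gamma y) + a * ln (Gamma (y + 1))"
    using convex_onD[OF log_convex_Gamma_real, of a y "y + 1"] assms by simp
  also have "Gamma (y + 1) = y * Gamma y"
    using assms(1) by (intro Gamma_plus1) (auto dest: nonpos_Ints_nonpos)
  finally have "ln (Gamma (y + a)) \<le> ln (y powr a * Gamma y)"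
    using assms Gy Gy0 by (simp add: ln_mult ln_powr algebra_simps)
  then show ?thesis
    using assms Gy Gy0 by simp
qed

lemma powr_Gamma_le_Gamma_add:
  fixes y a :: real
  assumes "y > 0" "a \<ge> 1"
  shows "y powr a * Gamma y \<le> Gamma (y + a)"
proof -
  have Gy: "Gamma y > 0" "Gamma (y + a) > 0"
    using assms by (simp_all add: Gamma_real_pos)
  then have Gy0: "Gamma y \<noteq> 0"
    by simp
  have "ln (Gamma ((1 - 1 / a) *\<^sub>R y + (1 / a) *\<^sub>R (y + a)))
          \<le> (1 - 1 / a) * ln (Gamma y) + 1 / a * ln (Gamma (y + a))"
    using convex_onD[OF log_convex_Gamma_real, of "1 / a" y "y + a"] assms by simp
  also have "(1 - 1 / a) *\<^sub>R y + (1 / a) *\<^sub>R (y + a) = y + 1"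
    using assms by (simp add: field_simps)
  also have "Gamma (y + 1) = y * Gamma y"
    using assms(1) by (intro Gamma_plus1) (auto dest: nonpos_Ints_nonpos)
  finally have "a * ln y + ln (Gamma y) \<le> ln (Gamma (y + a))"
    using assms Gy Gy0 by (simp add: ln_mult field_simps)
  then have "ln (y powr a * Gamma y) \<le> ln (Gamma (y + a))"
    using assms Gy Gy0 by (simp add: ln_mult ln_powr)
  then show ?thesis
    using assms Gy Gy0 by simp
qed

lemma has_bochner_integral_Gamma:
  fixes a :: real
  assumes "a > 0"
  shows "has_bochner_integral lborel (\<lambda>t. indicator {0<..} t * (t powr (a - 1) / exp t)) (Gamma a)"
proof -
  have "has_bochner_integral lborel (\<lambda>t. indicator {0..} t * t powr (a - 1) / exp t) (Gamma a)"
  proof (rule has_bochner_integral_nn_integral)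
    show "(\<integral>\<^sup>+t. ennreal (indicator {0..} t * t powr (a - 1) / exp t) \<partial>lborel) = ennreal (Gamma a)"
      using Gamma_conv_nn_integral_real[OF assms] by simp
  qed (use assms in \<open>auto simp: Gamma_real_pos less_imp_le\<close>)
  moreover have "(\<lambda>t. indicator {0..} t * t powr (a - 1) / exp t)
                   = (\<lambda>t. indicator {0<..} t * (t powr (a - 1) / exp t))"
    by (rule ext) (auto simp: indicator_def)
  ultimately show ?thesis
    by simp
qed

lemma has_bochner_integral_Gamma_scaled:
  fixes a b :: real
  assumes "a > 0" "b > 0"
  shows "has_bochner_integral lborel
           (\<lambda>t. indicator {0<..} t * (t powr (a - 1) * exp (- (b * t)))) (Gamma a / b powr a)"
proof -
  let ?g = "\<lambda>t. indicator {0<..} t * (t powr (a - 1) / exp t) :: real"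
  have "has_bochner_integral lborel (\<lambda>t. ?g (0 + b * t)) (Gamma a /\<^sub>R \<bar>b\<bar>)"
    using lborel_has_bochner_integral_real_affine_iff[of b ?g "Gamma a" 0] assms
      has_bochner_integral_Gamma by simp
  then have "has_bochner_integral lborel (\<lambda>t. b powr (1 - a) * ?g (0 + b * t))
               (b powr (1 - a) * (Gamma a /\<^sub>R \<bar>b\<bar>))"
    by (rule has_bochner_integral_mult_right)
  moreover have "b powr (1 - a) * (Gamma a /\<^sub>R \<bar>b\<bar>) = Gamma a / b powr a"
    using assms by (simp add: powr_diff field_simps)
  moreover have "(\<lambda>t. b powr (1 - a) * ?g (0 + b * t))
                   = (\<lambda>t. indicator {0<..} t * (t powr (a - 1) * exp (- (b * t))))"
    using assms
    by (auto simp: indicator_def powr_mult zero_less_mult_iff powr_diff exp_minus field_simps)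
  ultimately show ?thesis
    by (simp only:)
qed

lemma has_bochner_integral_gamma_dens_powr:
  assumes "x > 0" "y > 0" "y + p > 0"
  shows "has_bochner_integral lborel (\<lambda>t. indicator {0<..} t * (t powr p * gamma_dens y x t))
           (x powr p / g_lam p y)"
proof -
  define C where "C = (1 / Gamma y) * (y / x) powr y"
  have "has_bochner_integral lborel
          (\<lambda>t. C * (indicator {0<..} t * (t powr (y + p - 1) * exp (- (y / x * t)))))
          (C * (Gamma (y + p) / (y / x) powr (y + p)))"
    using assms by (intro has_bochner_integral_mult_right has_bochner_integral_Gamma_scaled) auto
  moreover have "C * (Gamma (y + p) / (y / x) powr (y + p)) = x powr p / g_lam p y"
    using assms Gamma_real_pos[of y] Gamma_real_pos[of "y + p"]
    by (simp add: C_def g_lam_def powr_add powr_divide field_simps add.commute)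
  moreover have "(\<lambda>t. C * (indicator {0<..} t * (t powr (y + p - 1) * exp (- (y / x * t)))))
                   = (\<lambda>t. indicator {0<..} t * (t powr p * gamma_dens y x t))"
    by (auto simp: C_def gamma_dens_def indicator_def powr_add[symmetric] algebra_simps)
  ultimately show ?thesis
    by (simp only:)
qed

lemma has_bochner_integral_gamma_dens:
  assumes "x > 0" "y > 0"
  shows "has_bochner_integral lborel (\<lambda>t. indicator {0<..} t * gamma_dens y x t) 1"
proof -
  have "(\<lambda>t. indicator {0<..} t * (t powr 0 * gamma_dens y x t)) = (\<lambda>t. indicator {0<..} t * gamma_dens y x t)"
    by (auto simp: indicator_def)
  moreover have "Gamma y \<noteq> 0"
    using Gamma_real_pos[OF assms(2)] by simp
  ultimately show ?thesis
    using has_bochner_integral_gamma_dens_powr[of x y 0] assms by (simp add: g_lam_def)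
qed

lemma gamma_dens_pos:
  assumes "x > 0" "y > 0" "t > 0"
  shows "gamma_dens y x t > 0"
  using assms by (simp add: gamma_dens_def Gamma_real_pos)

lemma integrable_bounded_mult_gamma_dens:
  assumes "x > 0" "y > 0" "continuous_on {0<..} f" "\<And>t. t > 0 \<Longrightarrow> \<bar>f t\<bar> \<le> B"
  shows "integrable lborel (\<lambda>t. indicator {0<..} t * (f t * gamma_dens y x t))"
proof (rule Bochner_Integration.integrable_bound)
  show "integrable lborel (\<lambda>t. B * (indicator {0<..} t * gamma_dens y x t))"
    using has_bochner_integral_gamma_dens[OF assms(1,2)]
    by (intro integrable_mult_right) (auto simp: has_bochner_integral_iff)
  have "continuous_on {0<..} (\<lambda>t. f t * gamma_dens y x t)"
    unfolding gamma_dens_def using assms by (intro continuous_intros) auto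
  from borel_measurable_continuous_on_indicator[OF _ this]
  show "(\<lambda>t. indicator {0<..} t * (f t * gamma_dens y x t)) \<in> borel_measurable lborel"
    by simp
  show "AE t in lborel. norm (indicator {0<..} t * (f t * gamma_dens y x t))
                          \<le> norm (B * (indicator {0<..} t * gamma_dens y x t))"
  proof (intro AE_I2)
    fix t :: real
    show "norm (indicator {0<..} t * (f t * gamma_dens y x t)) \<le> norm (B * (indicator {0<..} t * gamma_dens y x t))"
      using assms(4)[of t] gamma_dens_pos[OF assms(1,2), of t]
      by (cases "t > 0") (auto simp: abs_mult intro: mult_right_mono)
  qed
qed

lemma integral_pos_if_isCont:
  fixes u :: "real \<Rightarrow> real"
  assumes "integrable lborel u" "\<And>t. 0 \<le> u t" "isCont u t0" "0 < u t0"
  shows "0 < integral\<^sup>L lborel u"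
proof -
  obtain e where "e > 0" and e: "\<And>t. dist t0 t < e \<Longrightarrow> u t \<noteq> 0"
    using continuous_at_avoid[OF assms(3), of 0] assms(4) by auto
  have "\<not> (AE t in lborel. u t = 0)"
  proof
    assume "AE t in lborel. u t = 0"
    then have "AE t in lborel. t \<notin> {t0 - e<..<t0 + e}"
      by eventually_elim (use e in \<open>auto simp: dist_real_def\<close>)
    then have "emeasure lborel {t0 - e<..<t0 + e} = 0"
      by (subst (asm) AE_iff_measurable[of "{t0 - e<..<t0 + e}"]) auto
    with \<open>e > 0\<close> show False
      by simp
  qed
  then have "integral\<^sup>L lborel u \<noteq> 0"
    using integral_nonneg_eq_0_iff_AE[OF assms(1)] assms(2) by blast
  moreover have "0 \<le> integral\<^sup>L lborel u"
    using assms(2) by (intro integral_nonneg_AE) auto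
  ultimately show ?thesis
    by simp
qed

lemma bounded_nonconstant_not_affine_in_powr:
  fixes f :: "real \<Rightarrow> real"
  assumes "lam > 0" "bounded (f ` {0<..})" "\<exists>a>0. \<exists>b>0. f a \<noteq> f b"
  shows "\<exists>t>0. f t \<noteq> a + c * t powr lam"
proof (rule ccontr)
  assume "\<not> (\<exists>t>0. f t \<noteq> a + c * t powr lam)"
  then have affine: "\<And>t. t > 0 \<Longrightarrow> f t = a + c * t powr lam"
    by blast
  obtain B where B: "\<And>t. t > 0 \<Longrightarrow> \<bar>f t\<bar> \<le> B"
    using assms(2) unfolding bounded_iff by auto
  have "c = 0"
  proof (rule ccontr)
    assume "c \<noteq> 0"
    define t where "t = ((B + \<bar>a\<bar> + 1) / \<bar>c\<bar>) powr (1 / lam)"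
    have "B \<ge> 0"
      using B[of 1] by simp
    then have "t > 0" and "\<bar>c\<bar> * t powr lam = B + \<bar>a\<bar> + 1"
      using \<open>c \<noteq> 0\<close> assms(1) by (simp_all add: t_def powr_powr)
    then have "\<bar>f t\<bar> > B"
      using affine[of t] by (auto simp: abs_mult)
    with B[OF \<open>t > 0\<close>] show False
      by simp
  qed
  then show False
    using affine assms(3) by auto
qed

lemma g_lam_pos:
  assumes "y > 0" "lam + y > 0"
  shows "0 < g_lam lam y"
  using assms by (simp add: g_lam_def Gamma_real_pos)

lemma one_le_g_lam:
  assumes "y > 0" "0 \<le> lam" "lam \<le> 1"
  shows "1 \<le> g_lam lam y"
  using Gamma_add_le_powr_Gamma[OF assms] assms Gamma_real_pos[of "lam + y"]
  by (simp add: g_lam_def add.commute)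

lemma g_lam_le_one:
  assumes "y > 0" "lam \<ge> 1"
  shows "g_lam lam y \<le> 1"
  using powr_Gamma_le_Gamma_add[OF assms] assms Gamma_real_pos[of "lam + y"]
  by (simp add: g_lam_def add.commute)

context
  fixes lam :: real and f :: "real \<Rightarrow> real"
  assumes lam: "lam > 0" and bernstein: "gen_bernstein lam f"
begin

lemma gen_bernstein_nonneg: "t > 0 \<Longrightarrow> 0 \<le> f t"
  using bernstein by (simp add: gen_bernstein_def)

lemma gen_bernstein_has_real_derivative:
  assumes "t > 0"
  shows "(f has_real_derivative deriv f t * t powr (1 - lam) * t powr (lam - 1)) (at t)"
proof -
  have "(f has_real_derivative deriv f t) (at t)"
    using bernstein assms by (auto simp: gen_bernstein_def intro: smooth_on_has_real_derivative)
  moreover have "t powr (1 - lam) * t powr (lam - 1) = 1"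
    using assms by (simp flip: powr_add)
  ultimately show ?thesis
    by (simp add: mult.assoc)
qed

lemma gen_bernstein_isCont: "t > 0 \<Longrightarrow> isCont f t"
  using gen_bernstein_has_real_derivative DERIV_isCont by blast

lemma gen_bernstein_continuous_on: "continuous_on {0<..} f"
  using gen_bernstein_isCont by (simp add: continuous_at_imp_continuous_on)

lemma gen_bernstein_kernel_nonneg: "t > 0 \<Longrightarrow> 0 \<le> deriv f t * t powr (1 - lam)"
  using bernstein completely_monotonic_on_nonneg unfolding gen_bernstein_def by fastforce

lemma gen_bernstein_kernel_antimono:
  assumes "0 < s" "s \<le> t"
  shows "deriv f t * t powr (1 - lam) \<le> deriv f s * s powr (1 - lam)"
proof (rule completely_monotonic_on_antimono[of "{0<..}" "\<lambda>x. deriv f x * x powr (1 - lam)"])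
  show "completely_monotonic_on {0<..} (\<lambda>x. deriv f x * x powr (1 - lam))"
    using bernstein by (simp add: gen_bernstein_def)
qed (use assms in auto)

lemma gen_bernstein_tangent:
  "r > 0 \<Longrightarrow> t > 0 \<Longrightarrow> f t \<le> f r + deriv f r * r powr (1 - lam) / lam * (t powr lam - r powr lam)"
  by (rule concave_in_powr_tangent[OF lam gen_bernstein_has_real_derivative gen_bernstein_kernel_antimono])

lemma gen_bernstein_mono:
  assumes "0 < s" "s \<le> t"
  shows "f s \<le> f t"
proof (rule deriv_nonneg_imp_mono[OF gen_bernstein_has_real_derivative _ \<open>s \<le> t\<close>])
  fix u assume "u \<in> {s..t}"
  then show "0 < u" "0 \<le> deriv f u * u powr (1 - lam) * u powr (lam - 1)"
    using assms(1) gen_bernstein_kernel_nonneg[of u] by auto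
qed

lemma gen_bernstein_deriv_le:
  assumes "x > 0"
  shows "x * deriv f x \<le> lam * f x"
proof -
  let ?c = "deriv f x * x powr (1 - lam) / lam"
  have pos: "\<forall>\<^sub>F t in at_right 0. (0::real) < t"
    by (rule eventually_at_right_less)
  have "((\<lambda>t. f x + ?c * (t powr lam - x powr lam)) \<longlongrightarrow> f x + ?c * (0 - x powr lam)) (at_right 0)"
    using lam pos by (intro tendsto_intros tendsto_zero_powrI) (auto elim: eventually_mono)
  moreover have "\<forall>\<^sub>F t in at_right 0. 0 \<le> f x + ?c * (t powr lam - x powr lam)"
    using pos by eventually_elim (use gen_bernstein_tangent[OF assms] gen_bernstein_nonneg in force)
  ultimately have "0 \<le> f x + ?c * (0 - x powr lam)"
    by (rule tendsto_lowerbound) simp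
  moreover have "x powr (1 - lam) * x powr lam = x"
    using assms by (simp flip: powr_add)
  ultimately show ?thesis
    using lam by (simp add: field_simps)
qed

lemma gen_bernstein_div_powr_antimono:
  assumes "0 < x" "x \<le> r"
  shows "f r / r powr lam \<le> f x / x powr lam"
proof -
  let ?c = "deriv f x * x powr (1 - lam) / lam"
  have "x powr (1 - lam) * x powr lam = x"
    using assms by (simp flip: powr_add)
  then have "?c * x powr lam \<le> f x"
    using gen_bernstein_deriv_le[OF assms(1)] lam by (simp add: field_simps)
  then have c: "?c \<le> f x / x powr lam"
    using assms by (simp add: le_divide_eq)
  have "x powr lam \<le> r powr lam"
    using assms lam by (intro powr_mono2) auto
  have "f r \<le> f x + ?c * (r powr lam - x powr lam)"
    using gen_bernstein_tangent assms by simp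
  also have "\<dots> \<le> f x + f x / x powr lam * (r powr lam - x powr lam)"
    using c \<open>x powr lam \<le> r powr lam\<close> by (intro add_left_mono mult_right_mono) auto
  also have "\<dots> = f x / x powr lam * r powr lam"
    using assms by (simp add: field_simps)
  finally show ?thesis
    using assms by (simp add: field_simps)
qed

context
  assumes bounded: "bounded (f ` {0<..})" and nonconst: "\<exists>a>0. \<exists>b>0. f a \<noteq> f b"
begin

lemma gen_bernstein_gamma_integral_less:
  assumes x: "x > 0" and y: "y > 0" and r: "r > 0" "r powr lam = x powr lam / g_lam lam y"
  shows "(LBINT t:{0<..}. f t * gamma_dens y x t) < f r"
proof -
  let ?D = "gamma_dens y x" and ?i = "indicator {0<..} :: real \<Rightarrow> real"
  define c where "c = deriv f r * r powr (1 - lam) / lam"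
  define \<psi> where "\<psi> t = f r + c * (t powr lam - r powr lam) - f t" for t
  have \<psi>_nonneg: "0 \<le> \<psi> t" if "t > 0" for t
    using gen_bernstein_tangent[OF r(1) that] by (simp add: \<psi>_def c_def)
  obtain t0 where "t0 > 0" "f t0 \<noteq> (f r - c * r powr lam) + c * t0 powr lam"
    using bounded_nonconstant_not_affine_in_powr[OF lam bounded nonconst] by blast
  then have t0: "t0 > 0" "\<psi> t0 > 0"
    using \<psi>_nonneg[of t0] by (auto simp: \<psi>_def algebra_simps)
  obtain B where B: "\<And>t. t > 0 \<Longrightarrow> \<bar>f t\<bar> \<le> B"
    using bounded unfolding bounded_iff by auto
  define E where "E = (LBINT t:{0<..}. f t * gamma_dens y x t)"
  have "has_bochner_integral lborel (\<lambda>t. ?i t * (f t * ?D t)) E"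
    unfolding E_def set_lebesgue_integral_def
    using integrable_bounded_mult_gamma_dens[OF x y gen_bernstein_continuous_on B]
    by (simp add: has_bochner_integral_integrable)
  then have "has_bochner_integral lborel
      (\<lambda>t. (f r - c * r powr lam) * (?i t * ?D t) + c * (?i t * (t powr lam * ?D t)) - ?i t * (f t * ?D t))
      ((f r - c * r powr lam) * 1 + c * r powr lam - E)"
    unfolding r(2)
    by (intro has_bochner_integral_diff has_bochner_integral_add has_bochner_integral_mult_right
        has_bochner_integral_gamma_dens has_bochner_integral_gamma_dens_powr x y) (use lam y in auto)
  moreover have "(\<lambda>t. (f r - c * r powr lam) * (?i t * ?D t) + c * (?i t * (t powr lam * ?D t)) - ?i t * (f t * ?D t))
                   = (\<lambda>t. ?i t * (?D t * \<psi> t))"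
    by (auto simp: \<psi>_def algebra_simps)
  ultimately have integral: "has_bochner_integral lborel (\<lambda>t. ?i t * (?D t * \<psi> t)) (f r - E)"
    by simp
  have "0 < integral\<^sup>L lborel (\<lambda>t. ?i t * (?D t * \<psi> t))"
  proof (rule integral_pos_if_isCont)
    show "integrable lborel (\<lambda>t. ?i t * (?D t * \<psi> t))"
      using integral by (simp add: has_bochner_integral_iff)
    show "0 \<le> ?i t * (?D t * \<psi> t)" for t
      using \<psi>_nonneg[of t] gamma_dens_pos[OF x y, of t] by (cases "t > 0") auto
    have "isCont ?i t0"
      using t0(1) by (simp add: isCont_indicator)
    then show "isCont (\<lambda>t. ?i t * (?D t * \<psi> t)) t0"
      unfolding \<psi>_def gamma_dens_def using x y t0(1) gen_bernstein_isCont[OF t0(1)]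
      by (intro continuous_intros) auto
    show "0 < ?i t0 * (?D t0 * \<psi> t0)"
      using t0 gamma_dens_pos[OF x y t0(1)] by simp
  qed
  with integral show ?thesis
    by (simp add: has_bochner_integral_integral_eq E_def)
qed

lemma gen_bernstein_gamma_integral_less_self:
  assumes "lam \<le> 1" "x > 0" "y > 0"
  shows "(LBINT t:{0<..}. f t * gamma_dens y x t) < f x"
proof -
  define g where "g = g_lam lam y"
  have "1 \<le> g"
    unfolding g_def using one_le_g_lam assms lam by simp
  define r where "r = x / g powr (1 / lam)"
  have "r > 0" "r powr lam = x powr lam / g"
    using \<open>1 \<le> g\<close> assms lam by (simp_all add: r_def powr_divide powr_powr)
  moreover have "r \<le> x"
    using \<open>1 \<le> g\<close> assms lam ge_one_powr_ge_zero[of g "1 / lam"] by (simp add: r_def divide_le_eq)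
  ultimately show ?thesis
    using gen_bernstein_gamma_integral_less[OF assms(2,3)] gen_bernstein_mono
    unfolding g_def by (meson less_le_trans)
qed

lemma gen_bernstein_g_lam_gamma_integral_less_self:
  assumes "lam \<ge> 1" "x > 0" "y > 0"
  shows "g_lam lam y * (LBINT t:{0<..}. f t * gamma_dens y x t) < f x"
proof -
  define g where "g = g_lam lam y"
  have g: "0 < g" "g \<le> 1"
    unfolding g_def using g_lam_pos g_lam_le_one assms lam by simp_all
  define r where "r = x / g powr (1 / lam)"
  have "r > 0" and r: "r powr lam = x powr lam / g"
    using g assms lam by (simp_all add: r_def powr_divide powr_powr)
  have "x \<le> r"
    using g assms lam powr_le1[of "1 / lam" g] by (simp add: r_def le_divide_eq)
  have "g * (LBINT t:{0<..}. f t * gamma_dens y x t) < g * f r"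
    using gen_bernstein_gamma_integral_less[OF assms(2,3) \<open>r > 0\<close>] r g unfolding g_def by simp
  also have "g * f r = x powr lam * (f r / r powr lam)"
    using r g \<open>r > 0\<close> by (simp add: field_simps)
  also have "\<dots> \<le> x powr lam * (f x / x powr lam)"
    by (rule mult_left_mono[OF gen_bernstein_div_powr_antimono[OF assms(2) \<open>x \<le> r\<close>]]) simp
  also have "\<dots> = f x"
    using assms by simp
  finally show ?thesis
    unfolding g_def .
qed

end

end

theorem theorem1p2:
  fixes lam :: real and f :: "real \<Rightarrow> real"
  assumes "lam > 0"
    and "gen_bernstein lam f"
    and "bounded (f ` {0<..})"
    and "\<exists>a>0. \<exists>b>0. f a \<noteq> f b"
  shows "(lam \<le> 1 \<longrightarrow> (\<forall>x>0. \<forall>y>0.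
            (LBINT t:{0<..}. f t * gamma_dens y x t) < f x))
       \<and> (lam > 1 \<longrightarrow> (\<forall>x>0. \<forall>y>0.
            g_lam lam y * (LBINT t:{0<..}. f t * gamma_dens y x t) < f x))"
  using gen_bernstein_gamma_integral_less_self[OF assms]
    gen_bernstein_g_lam_gamma_integral_less_self[OF assms]
  by simp

end
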